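(* Let $(X,d)$ be a metric space (not necessarily complete) with $|X|\geqslant 3$, and let $T\colon X\to X$ satisfy: (i) $T$ has no periodic points of prime period $2$, i.e. $T(T(x))\neq x$ for every $x\in X$ with $Tx\neq x$; (ii) there exist $\alpha,\lambda\geqslant0$ with $2\alpha+\frac{3\lambda}{2}<1$ such that $$d(Tx,Ty)+d(Ty,Tz)+d(Tx,Tz)\leqslant \alpha\big(d(x,y)+d(y,z)+d(z,x)\big)+\lambda\big(d(x,Tx)+d(y,Ty)+d(z,Tz)\big)$$ for all pairwise distinct $x,y,z\in X$; (iii) $T$ is continuous at a point $x^*\in X$; (iv) there exists $x_0\in X$ such that the sequence of iterates $x_n=Tx_{n-1}$, $n=1,2,\dots$, has a subsequence $(x_{n_k})$ converging to $x^*$. Then $x^*$ is a fixed point of $T$, and $T$ has at most two fixed points. *)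

theory Defs
  imports "HOL-Analysis.Analysis"
begin

end

theory Submission
  imports Defs
begin

text \<open>Along an orbit that never reaches a fixed point, three consecutive iterates are pairwise
distinct because \<open>T\<close> has no 2-cycles, so condition (ii) applies to them. Bounding every side of a
triangle by half its perimeter turns (ii) into \<open>p (n+1) \<le> (\<alpha> + \<lambda>) / (1 - \<lambda>/2) * p n\<close> for the
perimeters \<open>p n\<close> of consecutive triples, so the steps \<open>d (x n) (x (n+1))\<close> tend to 0. Hence \<open>x\<^sup>*\<close>
and, by continuity, \<open>T x\<^sup>*\<close> are limits of the same subsequence. Three distinct fixed points
would form a triangle whose perimeter is at most \<open>\<alpha>\<close> times itself.\<close>

definition perimeter :: "'a::metric_space \<Rightarrow> 'a \<Rightarrow> 'a \<Rightarrow> real" where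
  "perimeter x y z = dist x y + dist y z + dist x z"

definition contracts_perimeters :: "('a::metric_space \<Rightarrow> 'a) \<Rightarrow> real \<Rightarrow> real \<Rightarrow> bool" where
  "contracts_perimeters T a l \<longleftrightarrow> (\<forall>x y z. x \<noteq> y \<longrightarrow> y \<noteq> z \<longrightarrow> x \<noteq> z \<longrightarrow>
     perimeter (T x) (T y) (T z) \<le> a * perimeter x y z + l * (dist x (T x) + dist y (T y) + dist z (T z)))"

lemma contracts_perimetersD:
  "contracts_perimeters T a l \<Longrightarrow> x \<noteq> y \<Longrightarrow> y \<noteq> z \<Longrightarrow> x \<noteq> z \<Longrightarrow>
    perimeter (T x) (T y) (T z) \<le> a * perimeter x y z + l * (dist x (T x) + dist y (T y) + dist z (T z))"
  unfolding contracts_perimeters_def by blast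

lemma perimeter_nonneg: "0 \<le> perimeter x y z"
  by (simp add: perimeter_def)

lemma perimeter_pos: "x \<noteq> y \<Longrightarrow> 0 < perimeter x y z"
  by (simp add: perimeter_def add_pos_nonneg)

lemma dist_le_half_perimeter:
  shows "dist x y \<le> perimeter x y z / 2" and "dist y z \<le> perimeter x y z / 2"
  using dist_triangle2[of x y z] dist_triangle2[of y z x]
  by (simp_all add: perimeter_def dist_commute)

lemma perimeter_step_along_orbit:
  assumes T: "contracts_perimeters T a l" and l: "0 \<le> l" "l < 2"
    and no_per2: "\<And>x. T x \<noteq> x \<Longrightarrow> T (T x) \<noteq> x"
    and orbit: "\<And>n. x (Suc n) = T (x n)" and moving: "\<And>n. T (x n) \<noteq> x n"
  shows "perimeter (x (Suc n)) (x (Suc (Suc n))) (x (Suc (Suc (Suc n))))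
    \<le> (a + l) / (1 - l / 2) * perimeter (x n) (x (Suc n)) (x (Suc (Suc n)))"
proof -
  let ?p = "\<lambda>n. perimeter (x n) (x (Suc n)) (x (Suc (Suc n)))"
  have distinct: "x n \<noteq> x (Suc n)" "x (Suc n) \<noteq> x (Suc (Suc n))" "x n \<noteq> x (Suc (Suc n))"
    using moving[of n] moving[of "Suc n"] no_per2[OF moving[of n]] by (simp_all add: orbit)
  have "?p (Suc n) \<le> a * ?p n + l * (dist (x n) (x (Suc n)) + dist (x (Suc n)) (x (Suc (Suc n)))
      + dist (x (Suc (Suc n))) (x (Suc (Suc (Suc n)))))"
    using contracts_perimetersD[OF T distinct] by (simp add: orbit)
  also have "\<dots> \<le> a * ?p n + l * (?p n / 2 + ?p n / 2 + ?p (Suc n) / 2)"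
    using l dist_le_half_perimeter by (intro add_left_mono mult_left_mono add_mono) auto
  finally have "(1 - l / 2) * ?p (Suc n) \<le> (a + l) * ?p n"
    by (simp add: algebra_simps)
  then show ?thesis
    using l by (simp add: field_simps)
qed

lemma orbit_steps_tendsto_zero:
  assumes T: "contracts_perimeters T a l" and "0 \<le> a" "0 \<le> l" "a + 3 * l / 2 < 1"
    and no_per2: "\<And>x. T x \<noteq> x \<Longrightarrow> T (T x) \<noteq> x"
    and orbit: "\<And>n. x (Suc n) = T (x n)"
  shows "(\<lambda>n. dist (x n) (x (Suc n))) \<longlonglongrightarrow> 0"
proof (cases "\<exists>N. T (x N) = x N")
  case True
  then obtain N where fixed: "T (x N) = x N" ..
  have "x n = x N" if "N \<le> n" for n
    using that by (induction n rule: dec_induct) (simp_all add: orbit fixed)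
  then have "\<forall>\<^sub>F n in sequentially. dist (x n) (x (Suc n)) = 0"
    unfolding eventually_sequentially by (metis dist_self le_SucI)
  then show ?thesis
    by (rule tendsto_eventually)
next
  case False
  let ?p = "\<lambda>n. perimeter (x n) (x (Suc n)) (x (Suc (Suc n)))"
  have "l < 2" and ratio: "(a + l) / (1 - l / 2) < 1"
    using assms(2-4) by (simp_all add: divide_less_eq)
  have "summable ?p"
  proof (rule summable_ratio_test[where N = 0, OF ratio])
    fix n
    show "norm (?p (Suc n)) \<le> (a + l) / (1 - l / 2) * norm (?p n)"
      using perimeter_step_along_orbit[where x = x, OF T \<open>0 \<le> l\<close> \<open>l < 2\<close> no_per2 orbit] False
      by (simp add: perimeter_nonneg)
  qed
  then have "?p \<longlonglongrightarrow> 0"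
    by (rule summable_LIMSEQ_zero)
  show ?thesis
  proof (rule real_tendsto_sandwich[OF _ _ tendsto_const \<open>?p \<longlonglongrightarrow> 0\<close>])
    show "\<forall>\<^sub>F n in sequentially. 0 \<le> dist (x n) (x (Suc n))"
      by simp
    show "\<forall>\<^sub>F n in sequentially. dist (x n) (x (Suc n)) \<le> ?p n"
      by (intro always_eventually allI) (simp add: perimeter_def)
  qed
qed

lemma fixed_point_at_limit:
  fixes T :: "'a::metric_space \<Rightarrow> 'a"
  assumes "isCont T c" and "y \<longlonglongrightarrow> c" and "(\<lambda>k. dist (y k) (T (y k))) \<longlonglongrightarrow> 0"
  shows "T c = c"
proof -
  have "(\<lambda>k. dist (y k) (T (y k))) \<longlonglongrightarrow> dist c (T c)"
    using assms(1,2) by (intro tendsto_dist isCont_tendsto_compose[where g = T])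
  with assms(3) have "dist c (T c) = 0"
    by (rule LIMSEQ_unique[symmetric])
  then show ?thesis
    by simp
qed

lemma no_three_distinct_fixed_points:
  assumes "contracts_perimeters T a l" "a < 1"
    and "T u = u" "T v = v" "T w = w" "u \<noteq> v" "v \<noteq> w" "u \<noteq> w"
  shows False
proof -
  have "perimeter u v w \<le> a * perimeter u v w"
    using contracts_perimetersD[OF assms(1) assms(6-8)] assms(3-5) by simp
  moreover have "a * perimeter u v w < perimeter u v w"
    using perimeter_pos[OF \<open>u \<noteq> v\<close>] \<open>a < 1\<close> by simp
  ultimately show False
    by simp
qed

lemma finite_card_le_2_if_no_three_distinct:
  assumes "\<And>u v w. u \<in> S \<Longrightarrow> v \<in> S \<Longrightarrow> w \<in> S \<Longrightarrow> u \<noteq> v \<Longrightarrow> v \<noteq> w \<Longrightarrow> u \<noteq> w \<Longrightarrow> False"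
  shows "finite S \<and> card S \<le> 2"
proof -
  obtain u v where "S \<subseteq> {u, v}"
    using assms by (metis insertCI subsetI)
  then show ?thesis
    using card_mono[of "{u, v}" S] finite_subset[of S "{u, v}"] by (auto simp: card_insert_if split: if_splits)
qed

lemma fixed_points_card_le_2:
  assumes "contracts_perimeters T a l" "a < 1"
  shows "finite {x. T x = x} \<and> card {x. T x = x} \<le> 2"
  using no_three_distinct_fixed_points[OF assms]
  by (intro finite_card_le_2_if_no_three_distinct) blast

theorem theorem5p1:
  fixes T :: "'a::metric_space \<Rightarrow> 'a" and a l :: real and xs x0 :: 'a
  assumes card3: "\<exists>u v w::'a. u \<noteq> v \<and> v \<noteq> w \<and> u \<noteq> w"
    and no_per2: "\<And>x. T x \<noteq> x \<Longrightarrow> T (T x) \<noteq> x"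
    and alpha_nonneg: "a \<ge> 0" and lambda_nonneg: "l \<ge> 0"
    and coeff: "2 * a + 3 * l / 2 < 1"
    and contr: "\<And>x y z. x \<noteq> y \<Longrightarrow> y \<noteq> z \<Longrightarrow> x \<noteq> z \<Longrightarrow>
        dist (T x) (T y) + dist (T y) (T z) + dist (T x) (T z)
          \<le> a * (dist x y + dist y z + dist z x) + l * (dist x (T x) + dist y (T y) + dist z (T z))"
    and cont: "isCont T xs"
    and subseq: "\<exists>r::nat \<Rightarrow> nat. strict_mono r \<and> (\<lambda>k. (T ^^ (r k)) x0) \<longlonglongrightarrow> xs"
  shows "T xs = xs \<and> finite {x. T x = x} \<and> card {x. T x = x} \<le> 2"
proof -
  have T: "contracts_perimeters T a l"
    unfolding contracts_perimeters_def perimeter_def using contr by (simp add: dist_commute)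
  define x where "x n = (T ^^ n) x0" for n
  have orbit: "x (Suc n) = T (x n)" for n
    by (simp add: x_def)
  have "a + 3 * l / 2 < 1"
    using coeff alpha_nonneg by linarith
  from orbit_steps_tendsto_zero[where x = x, OF T alpha_nonneg lambda_nonneg this no_per2 orbit]
  have steps: "(\<lambda>n. dist (x n) (x (Suc n))) \<longlonglongrightarrow> 0" .
  obtain r where "strict_mono r" and "(\<lambda>k. x (r k)) \<longlonglongrightarrow> xs"
    using subseq unfolding x_def by blast
  moreover have "(\<lambda>k. dist (x (r k)) (T (x (r k)))) \<longlonglongrightarrow> 0"
    using LIMSEQ_subseq_LIMSEQ[OF steps \<open>strict_mono r\<close>] by (simp add: o_def orbit)
  ultimately have "T xs = xs"
    using fixed_point_at_limit[OF cont] by blast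
  moreover have "finite {x. T x = x} \<and> card {x. T x = x} \<le> 2"
    using coeff lambda_nonneg by (intro fixed_points_card_le_2[OF T]) linarith
  ultimately show ?thesis
    by blast
qed

end
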